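(* Let $X$ be a finite $T_0$-space and let $x_i\in X$ be a beat point (up or down). Then $\det(X_M)=-\det\big((X\setminus\{x_i\})_M\big)$.
   Context: A finite $T_0$-space is identified with a finite poset via $x\le y$ iff $U_x\subseteq U_y$, where $U_x$ is the minimal open set containing $x$; subspaces carry the induced order. For a labelling $X=\{x_1,\dots,x_n\}$, $X_M=(x_{i,j})$ is the $n\times n$ matrix with $x_{i,j}=0$ if $x_i\le x_j$ and $x_{i,j}=1$ otherwise; its determinant does not depend on the labelling. A point $x$ is a down beat point if $\{y: y<x\}$ has a maximum, and an up beat point if $\{y:y>x\}$ has a minimum. *)

theory Defs
  imports "Jordan_Normal_Form.Determinant"
begin

text \<open>A finite T0-space is represented as a finite subset X of a partially ordered type;
  subspaces carry the induced (restricted) order.\<close>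

definition down_beat_point :: "'a::order set \<Rightarrow> 'a \<Rightarrow> bool" where
  "down_beat_point X x \<longleftrightarrow> x \<in> X \<and>
     (\<exists>m\<in>X. m < x \<and> (\<forall>y\<in>X. y < x \<longrightarrow> y \<le> m))"

definition up_beat_point :: "'a::order set \<Rightarrow> 'a \<Rightarrow> bool" where
  "up_beat_point X x \<longleftrightarrow> x \<in> X \<and>
     (\<exists>m\<in>X. x < m \<and> (\<forall>y\<in>X. x < y \<longrightarrow> m \<le> y))"

definition beat_point :: "'a::order set \<Rightarrow> 'a \<Rightarrow> bool" where
  "beat_point X x \<longleftrightarrow> down_beat_point X x \<or> up_beat_point X x"

definition poset_matrix :: "(nat \<Rightarrow> 'a::order) \<Rightarrow> nat \<Rightarrow> int mat" where
  "poset_matrix f n = mat n n (\<lambda>(i, j). if f i \<le> f j then 0 else 1)"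

end

theory Submission
  imports Defs
begin

text \<open>If x is a down beat point with maximum m of its down-set, then in X_M the column of x
  differs from the column of m only in the row of x; dually, an up beat point gives two rows
  that differ in one entry. Subtracting one from the other leaves a column (row) with a single
  entry -1 on the diagonal, and Laplace expansion along it deletes x and flips the sign.
  The labelling of the remaining minor is immaterial, as relabelling permutes rows and columns
  by the same permutation.\<close>

lemma down_beat_pointE:
  assumes "down_beat_point X x"
  obtains m where "m \<in> X" "\<not> x \<le> m" "\<And>y. y \<in> X - {x} \<Longrightarrow> y \<le> x \<longleftrightarrow> y \<le> m"
proof -
  obtain m where m: "m \<in> X" "m < x" and below: "\<forall>y\<in>X. y < x \<longrightarrow> y \<le> m"
    using assms by (auto simp: down_beat_point_def)
  have "y \<le> x \<longleftrightarrow> y \<le> m" if "y \<in> X - {x}" for y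
    using that below m(2) by (auto dest: order.strict_trans2)
  with m show thesis by (intro that) auto
qed

lemma up_beat_pointE:
  assumes "up_beat_point X x"
  obtains m where "m \<in> X" "\<not> m \<le> x" "\<And>y. y \<in> X - {x} \<Longrightarrow> x \<le> y \<longleftrightarrow> m \<le> y"
proof -
  obtain m where m: "m \<in> X" "x < m" and above: "\<forall>y\<in>X. x < y \<longrightarrow> m \<le> y"
    using assms by (auto simp: up_beat_point_def)
  have "x \<le> y \<longleftrightarrow> m \<le> y" if "y \<in> X - {x}" for y
    using that above m(2) by (auto dest: order.strict_trans1)
  with m show thesis by (intro that) auto
qed

lemma det_neg_unit_col:
  fixes A :: "'a::comm_ring_1 mat"
  assumes A: "A \<in> carrier_mat n n" and k: "k < n"
    and col: "\<And>i. i < n \<Longrightarrow> A $$ (i, k) = (if i = k then -1 else 0)"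
  shows "det A = - det (mat_delete A k k)"
proof -
  have "det A = (\<Sum>i<n. A $$ (i, k) * cofactor A i k)"
    by (rule laplace_expansion_column[OF A k])
  also have "\<dots> = (\<Sum>i<n. if i = k then - cofactor A k k else 0)"
    using col by (intro sum.cong) auto
  also have "\<dots> = - det (mat_delete A k k)"
    using k by (simp add: cofactor_def flip: mult_2)
  finally show ?thesis .
qed

lemma det_col_diff_neg_unit:
  fixes A :: "'a::comm_ring_1 mat"
  assumes A: "A \<in> carrier_mat n n" and k: "k < n" and l: "l < n" "l \<noteq> k"
    and diff: "\<And>i. i < n \<Longrightarrow> A $$ (i, k) - A $$ (i, l) = (if i = k then -1 else 0)"
  shows "det A = - det (mat_delete A k k)"
proof -
  let ?B = "addcol (-1) k l A"
  have B: "?B \<in> carrier_mat n n"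
    using A by (simp add: mat_addcol_def)
  have "mat_delete ?B k k = mat_delete A k k"
    using A by (intro eq_matI) (auto simp: mat_delete_def insert_index_def)
  moreover have "det ?B = - det (mat_delete ?B k k)"
    using A diff k l by (intro det_neg_unit_col[OF B k]) auto
  ultimately show ?thesis
    using det_addcol[OF l(1) l(2)[symmetric] A] by simp
qed

lemma det_row_diff_neg_unit:
  fixes A :: "'a::comm_ring_1 mat"
  assumes A: "A \<in> carrier_mat n n" and k: "k < n" and l: "l < n" "l \<noteq> k"
    and diff: "\<And>j. j < n \<Longrightarrow> A $$ (k, j) - A $$ (l, j) = (if j = k then -1 else 0)"
  shows "det A = - det (mat_delete A k k)"
proof -
  have "det A = det (transpose_mat A)"
    using det_transpose[OF A] by simp
  also have "\<dots> = - det (mat_delete (transpose_mat A) k k)"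
    using A diff k l by (intro det_col_diff_neg_unit[OF _ k l]) auto
  also have "mat_delete (transpose_mat A) k k = transpose_mat (mat_delete A k k)"
    using A by (intro eq_matI) (auto simp: mat_delete_def)
  also have "det \<dots> = det (mat_delete A k k)"
    using A by (intro det_transpose) (auto intro: mat_delete_carrier)
  finally show ?thesis .
qed

lemma det_permute_rows_cols:
  fixes A :: "'a::comm_ring_1 mat"
  assumes A: "A \<in> carrier_mat n n" and p: "p permutes {0..<n}"
  shows "det (mat n n (\<lambda>(i, j). A $$ (p i, p j))) = det A"
proof -
  define B where "B = mat n n (\<lambda>(i, j). A $$ (p i, j))"
  define C where "C = mat n n (\<lambda>(i, j). transpose_mat B $$ (p i, j))"
  have B: "B \<in> carrier_mat n n" and C: "C \<in> carrier_mat n n"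
    by (simp_all add: B_def C_def)
  have "p i < n" if "i < n" for i
    using p that by (simp add: permutes_in_image)
  then have "mat n n (\<lambda>(i, j). A $$ (p i, p j)) = transpose_mat C"
    by (intro eq_matI) (auto simp: B_def C_def)
  then have "det (mat n n (\<lambda>(i, j). A $$ (p i, p j))) = signof p * signof p * det A"
    using det_transpose[OF C] det_transpose[OF B] det_permute_rows[OF A p]
      det_permute_rows[OF _ p, of "transpose_mat B"] B
    by (simp add: B_def C_def)
  also have "signof p * signof p = (1::'a)"
    by (simp add: sign_def)
  finally show ?thesis by simp
qed

lemma poset_matrix_carrier [simp]: "poset_matrix f n \<in> carrier_mat n n"
  by (simp add: poset_matrix_def)

lemma poset_matrix_dim [simp]:
  "dim_row (poset_matrix f n) = n" "dim_col (poset_matrix f n) = n"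
  by (simp_all add: poset_matrix_def)

lemma poset_matrix_index [simp]:
  "i < n \<Longrightarrow> j < n \<Longrightarrow> poset_matrix f n $$ (i, j) = (if f i \<le> f j then 0 else 1)"
  by (simp add: poset_matrix_def)

lemma det_poset_matrix_relabel:
  assumes f: "bij_betw f {..<n} Y" and g: "bij_betw g {..<n} Y"
  shows "det (poset_matrix f n) = det (poset_matrix g n)"
proof -
  define p where "p i = (if i < n then inv_into {..<n} g (f i) else i)" for i
  have "bij_betw (inv_into {..<n} g \<circ> f) {..<n} {..<n}"
    using f g by (meson bij_betw_inv_into bij_betw_trans)
  then have "bij_betw p {..<n} {..<n}"
    by (rule bij_betw_cong[THEN iffD1, rotated]) (simp add: p_def)
  then have p: "p permutes {0..<n}"
    by (intro bij_imp_permutes) (auto simp: p_def lessThan_atLeast0)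
  have "f i = g (p i)" if "i < n" for i
    using f g that by (metis bij_betw_imp_surj_on f_inv_into_f imageI lessThan_iff p_def)
  moreover have "p i < n" if "i < n" for i
    using p that by (simp add: permutes_in_image)
  ultimately have "poset_matrix f n = mat n n (\<lambda>(i, j). poset_matrix g n $$ (p i, p j))"
    by (intro eq_matI) auto
  then show ?thesis
    by (simp add: det_permute_rows_cols[OF poset_matrix_carrier p])
qed

lemma mat_delete_poset_matrix:
  "mat_delete (poset_matrix f n) k k = poset_matrix (f \<circ> insert_index k) (n - 1)"
  by (intro eq_matI) (auto simp: mat_delete_def insert_index_def)

lemma bij_betw_insert_index:
  assumes f: "bij_betw f {..<n} X" and k: "k < n"
  shows "bij_betw (f \<circ> insert_index k) {..<n - 1} (X - {f k})"
proof -
  have "insert_index k ` {..<n - 1} = {..<n} - {k}"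
    using insert_index_image[of k "n - 1"] k by (simp add: lessThan_atLeast0)
  then have "bij_betw (insert_index k) {..<n - 1} ({..<n} - {k})"
    by (simp add: bij_betw_def insert_index_inj_on)
  moreover have "bij_betw f ({..<n} - {k}) (X - {f k})"
    using f k by (intro bij_betw_DiffI) (auto simp: bij_betw_def)
  ultimately show ?thesis
    by (rule bij_betw_trans)
qed

lemma det_poset_matrix_beat_point:
  assumes f: "bij_betw f {..<n} X" and k: "k < n" and beat: "beat_point X (f k)"
  shows "det (poset_matrix f n) = - det (poset_matrix (f \<circ> insert_index k) (n - 1))"
proof -
  have in_X: "f i \<in> X" and label_eq: "f i = f k \<longleftrightarrow> i = k" if "i < n" for i
    using f k that by (auto simp: bij_betw_def inj_on_def)
  have "det (poset_matrix f n) = - det (mat_delete (poset_matrix f n) k k)"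
    using beat unfolding beat_point_def
  proof
    assume "down_beat_point X (f k)"
    then obtain m where m: "m \<in> X" "\<not> f k \<le> m"
      and twin: "\<And>y. y \<in> X - {f k} \<Longrightarrow> y \<le> f k \<longleftrightarrow> y \<le> m"
      by (erule down_beat_pointE)
    obtain l where l: "l < n" "f l = m"
      using f m(1) by (metis bij_betw_def imageE lessThan_iff)
    show ?thesis
      using m l k in_X label_eq twin
      by (intro det_col_diff_neg_unit[OF poset_matrix_carrier k l(1)]) auto
  next
    assume "up_beat_point X (f k)"
    then obtain m where m: "m \<in> X" "\<not> m \<le> f k"
      and twin: "\<And>y. y \<in> X - {f k} \<Longrightarrow> f k \<le> y \<longleftrightarrow> m \<le> y"
      by (erule up_beat_pointE)
    obtain l where l: "l < n" "f l = m"
      using f m(1) by (metis bij_betw_def imageE lessThan_iff)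
    show ?thesis
      using m l k in_X label_eq twin
      by (intro det_row_diff_neg_unit[OF poset_matrix_carrier k l(1)]) auto
  qed
  then show ?thesis
    by (simp add: mat_delete_poset_matrix)
qed

theorem mainTheorem3:
  fixes X :: "'a::order set" and x :: 'a
    and f g :: "nat \<Rightarrow> 'a"
  assumes "finite X"
    and "beat_point X x"
    and "bij_betw f {..<card X} X"
    and "bij_betw g {..<card (X - {x})} (X - {x})"
  shows "det (poset_matrix f (card X)) = - det (poset_matrix g (card (X - {x})))"
proof -
  have "x \<in> X"
    using assms(2) by (auto simp: beat_point_def down_beat_point_def up_beat_point_def)
  then obtain k where k: "k < card X" "f k = x"
    using assms(3) by (metis bij_betw_def imageE lessThan_iff)
  have card: "card (X - {x}) = card X - 1"
    using \<open>x \<in> X\<close> assms(1) by simp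
  have "bij_betw (f \<circ> insert_index k) {..<card (X - {x})} (X - {x})"
    using bij_betw_insert_index[OF assms(3) k(1)] k(2) card by simp
  with assms(4) have "det (poset_matrix (f \<circ> insert_index k) (card X - 1))
      = det (poset_matrix g (card (X - {x})))"
    using card by (metis det_poset_matrix_relabel)
  then show ?thesis
    using det_poset_matrix_beat_point[OF assms(3) k(1)] assms(2) k(2) by simp
qed

end
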